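(* In the Bernoulli model, for a text $T$ let $\mathrm{occ}(T)$ be the number of occurrences of $w$ in $T$, $\mathrm{cl}(T)$ the number of clumps of $w$ in $T$, and $\mathrm{cov}(T)$ the number of positions of $T$ covered by at least one occurrence of $w$. Define $$\mathfrak{K}(z,x,t)=\frac{x\,\pi_w (zt)^{\ell}}{1-x\,K(zt)}\qquad\text{and}\qquad F(z,y)=N(z)+\frac{R(z)}{\pi_w z^{\ell}}\;y\;\frac{1}{1-\dfrac{M(z)-K(z)}{\pi_w z^{\ell}}\,y}\;U(z).$$ Then, as formal power series, $$G(z,x,t,u):=\sum_{T\in\mathcal{A}^*}\mathbf{P}(T)\,z^{|T|}x^{\mathrm{occ}(T)}t^{\mathrm{cov}(T)}u^{\mathrm{cl}(T)}=F\big(z,\,u\,\mathfrak{K}(z,x,t)\big).$$ Moreover $\mathfrak{K}(z,x,t)=\sum_{\mathfrak{c}}\mathbf{P}(\mathfrak{c})z^{|\mathfrak{c}|}t^{|\mathfrak{c}|}x^{\mathrm{occ}(\mathfrak{c})}$, the sum being over all words of $w\mathcal{C}^*$ (the possible clump words).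
   Context: Let $\mathcal{A}$ be a finite alphabet with $|\mathcal{A}|\ge2$ and $w\in\mathcal{A}^*$ a fixed word of length $\ell=|w|\ge 2$. Bernoulli model: each letter $a\in\mathcal{A}$ has probability $p_a>0$, $\sum_a p_a=1$, and $\mathbf{P}(a_1\cdots a_n)=\prod_i p_{a_i}$. For a language $L$ its generating function is $L(z)=\sum_{x\in L}\mathbf{P}(x)z^{|x|}$; $\pi_w=\mathbf{P}(w)$. An occurrence of $w$ in $T$ is a position interval $[i,i+\ell-1]$ with $T_i\cdots T_{i+\ell-1}=w$; two occurrences overlap if their intervals share a position; clumps are equivalence classes of occurrences under the transitive closure of overlapping. Autocorrelation set: $\mathcal{C}=\{\epsilon\}\cup\{e\in\mathcal{A}^+: |e|<\ell,\ \exists e'\in\mathcal{A}^+,\ we=e'w\}$, $\mathcal{C}_\circ=\mathcal{C}\setminus\{\epsilon\}$, $\mathcal{K}=\mathcal{C}_\circ\setminus\mathcal{C}_\circ\mathcal{A}^+$, with generating functions $C(z)$, $K(z)$. Languages: $\mathcal{R}=\{r\in\mathcal{A}^*w: \text{no } r=xwy,\ |y|>0\}$; $\mathcal{M}=\{m\in\mathcal{A}^+: wm\in\mathcal{A}^*w,\ \text{no } wm=xwy,\ |x|>0,|y|>0\}$; $\mathcal{U}=\{u\in\mathcal{A}^*: \text{no } wu=xwy,\ |x|>0\}$; $\mathcal{N}=\{n: w\text{ not a factor of }n\}$, with generating functions $R(z),M(z),U(z),N(z)$. It is known (Régnier–Szpankowski) that with $D(z)=\pi_w z^{\ell}+(1-z)C(z)$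 one has $R(z)=\pi_w z^{\ell}/D(z)$, $M(z)=1+(z-1)/D(z)$, $U(z)=1/D(z)$, $N(z)=C(z)/D(z)$. *)

theory Defs
  imports Complex_Main "HOL-Computational_Algebra.Formal_Power_Series"
begin

text \<open>Bernoulli model: alphabet = a finite type 'a, letter probabilities p.\<close>

definition prob :: "('a \<Rightarrow> real) \<Rightarrow> 'a list \<Rightarrow> real" where
  "prob p x = prod_list (map p x)"

definition gf :: "('a \<Rightarrow> real) \<Rightarrow> 'a list set \<Rightarrow> real fps" where
  "gf p L = Abs_fps (\<lambda>n. \<Sum>x\<in>{x. x \<in> L \<and> length x = n}. prob p x)"

text \<open>Starting positions (0-based) of occurrences of w in T.\<close>
definition occs :: "'a list \<Rightarrow> 'a list \<Rightarrow> nat set" where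
  "occs w T = {i. i + length w \<le> length T \<and> take (length w) (drop i T) = w}"

definition occ :: "'a list \<Rightarrow> 'a list \<Rightarrow> nat" where
  "occ w T = card (occs w T)"

definition cov :: "'a list \<Rightarrow> 'a list \<Rightarrow> nat" where
  "cov w T = card (\<Union>i\<in>occs w T. {i..<i + length w})"

definition overlap_rel :: "'a list \<Rightarrow> 'a list \<Rightarrow> (nat \<times> nat) set" where
  "overlap_rel w T = {(i, j). i \<in> occs w T \<and> j \<in> occs w T \<and>
       {i..<i + length w} \<inter> {j..<j + length w} \<noteq> {}}"

definition cl :: "'a list \<Rightarrow> 'a list \<Rightarrow> nat" where
  "cl w T = card (occs w T // trancl (overlap_rel w T))"

definition autocorr :: "'a list \<Rightarrow> 'a list set" where
  "autocorr w = {[]} \<union> {e. e \<noteq> [] \<and> length e < length w \<and> (\<exists>e'. e' \<noteq> [] \<and> w @ e = e' @ w)}"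

definition autocorr0 :: "'a list \<Rightarrow> 'a list set" where
  "autocorr0 w = autocorr w - {[]}"

definition Kset :: "'a list \<Rightarrow> 'a list set" where
  "Kset w = autocorr0 w - {c @ v | c v. c \<in> autocorr0 w \<and> v \<noteq> []}"

definition Rset :: "'a list \<Rightarrow> 'a list set" where
  "Rset w = {r. (\<exists>x. r = x @ w) \<and> \<not> (\<exists>x y. r = x @ w @ y \<and> y \<noteq> [])}"

definition Mset :: "'a list \<Rightarrow> 'a list set" where
  "Mset w = {m. m \<noteq> [] \<and> (\<exists>x. w @ m = x @ w) \<and>
      \<not> (\<exists>x y. w @ m = x @ w @ y \<and> x \<noteq> [] \<and> y \<noteq> [])}"

definition Uset :: "'a list \<Rightarrow> 'a list set" where
  "Uset w = {u. \<not> (\<exists>x y. w @ u = x @ w @ y \<and> x \<noteq> [])}"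

definition Nset :: "'a list \<Rightarrow> 'a list set" where
  "Nset w = {n. \<not> (\<exists>x y. n = x @ w @ y)}"

definition clump_words :: "'a list \<Rightarrow> 'a list set" where
  "clump_words w = {w @ concat cs | cs. set cs \<subseteq> autocorr w}"

text \<open>Trivariate series G(z,x,t,u), viewed as a series in z for given x,t,u.\<close>
definition Gser :: "('a \<Rightarrow> real) \<Rightarrow> 'a list \<Rightarrow> real \<Rightarrow> real \<Rightarrow> real \<Rightarrow> real fps" where
  "Gser p w x t u = Abs_fps (\<lambda>n. \<Sum>T\<in>{T. length T = n}.
      prob p T * x ^ occ w T * t ^ cov w T * u ^ cl w T)"

definition Kfrak :: "('a \<Rightarrow> real) \<Rightarrow> 'a list \<Rightarrow> real \<Rightarrow> real \<Rightarrow> real fps" where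
  "Kfrak p w x t =
     (fps_const x * fps_const (prob p w) * (fps_const t * fps_X) ^ length w) /
     (1 - fps_const x * fps_compose (gf p (Kset w)) (fps_const t * fps_X))"

definition Fser :: "('a \<Rightarrow> real) \<Rightarrow> 'a list \<Rightarrow> real fps \<Rightarrow> real fps" where
  "Fser p w y = gf p (Nset w) +
     gf p (Rset w) / (fps_const (prob p w) * fps_X ^ length w) * y *
     (1 / (1 - (gf p (Mset w) - gf p (Kset w)) / (fps_const (prob p w) * fps_X ^ length w) * y)) *
     gf p (Uset w)"

definition clump_ser :: "('a \<Rightarrow> real) \<Rightarrow> 'a list \<Rightarrow> real \<Rightarrow> real \<Rightarrow> real fps" where
  "clump_ser p w x t = Abs_fps (\<lambda>n. \<Sum>c\<in>{c. c \<in> clump_words w \<and> length c = n}.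
      prob p c * t ^ n * x ^ occ w c)"

end

theory Submission
  imports Defs
begin

(* This is the language-decomposition method of Regnier and Szpankowski,
   refined so that every factor also records its contribution to occ, cov and cl.
   Let E = A*w be the words ending with an occurrence of w.
   (1) Every text T either avoids w (T in N), or factors uniquely as T = S v with S in E
       and v in U (cut after the last occurrence); appending v changes no statistic.
   (2) Every S in E either has one occurrence (S in R), or factors uniquely as S = S' m with
       S' in E, m in M (cut after the second to last occurrence).  Appending m adds one
       occurrence, min(|m|, l) covered positions and a new clump exactly when |m| >= l;
       the short elements of M are exactly K.
   (3) Clump words w C* = w K* are either w or factor uniquely as c k with c a clump word
       and k in K; appending k adds one occurrence and |k| covered positions.
   The three factorizations give linear equations between weighted generating functions,
   whose solutions are compared with F(z, u Kfrak) and with Kfrak in the final theorem. *)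

unbundle fps_syntax

section \<open>Weighted generating functions of languages\<close>

definition wgf :: "('a list \<Rightarrow> real) \<Rightarrow> 'a list set \<Rightarrow> real fps" where
  "wgf f L = Abs_fps (\<lambda>n. \<Sum>x\<in>{x. x \<in> L \<and> length x = n}. f x)"

definition lang_prod :: "'a list set \<Rightarrow> 'a list set \<Rightarrow> 'a list set" where
  "lang_prod A B = (\<lambda>(a, b). a @ b) ` (A \<times> B)"

lemma lang_prodI: "a \<in> A \<Longrightarrow> b \<in> B \<Longrightarrow> a @ b \<in> lang_prod A B"
  unfolding lang_prod_def by (rule image_eqI[of _ _ "(a, b)"]) auto

lemma finite_words_of_length: "finite {x :: 'a::finite list. x \<in> L \<and> length x = n}"
  by (rule finite_subset[OF _ finite_lists_length_eq[OF finite_UNIV, of n]]) auto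

lemma wgf_nth: "wgf f L $ n = (\<Sum>x\<in>{x. x \<in> L \<and> length x = n}. f x)"
  by (simp add: wgf_def)

lemma gf_as_wgf: "gf p L = wgf (prob p) L"
  by (simp add: gf_def wgf_def)

lemma wgf_cong: "(\<And>x. x \<in> L \<Longrightarrow> f x = g x) \<Longrightarrow> wgf f L = wgf g L"
  by (auto simp: wgf_def intro!: fps_ext sum.cong)

lemma wgf_scale: "wgf (\<lambda>x. c * f x) L = fps_const c * wgf f L"
  by (auto simp: wgf_def sum_distrib_left intro!: fps_ext)

lemma wgf_nth_short: "(\<And>x. x \<in> L \<Longrightarrow> n < length x) \<Longrightarrow> wgf f L $ n = 0"
proof -
  assume "\<And>x. x \<in> L \<Longrightarrow> n < length x"
  hence "{x. x \<in> L \<and> length x = n} = {}" by fastforce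
  thus ?thesis unfolding wgf_nth by (metis sum.empty)
qed

lemma wgf_singleton: "wgf f {v} = fps_const (f v) * fps_X ^ length v"
proof (rule fps_ext)
  fix n
  have "{x. x \<in> {v} \<and> length x = n} = (if n = length v then {v} else {})" by auto
  thus "wgf f {v} $ n = (fps_const (f v) * fps_X ^ length v) $ n"
    by (simp add: wgf_nth fps_X_power_mult_nth)
qed

lemma wgf_Un_disjoint:
  fixes A B :: "'a::finite list set"
  assumes "A \<inter> B = {}"
  shows "wgf f (A \<union> B) = wgf f A + wgf f B"
proof (rule fps_ext)
  fix n
  have "{x. x \<in> A \<union> B \<and> length x = n} = {x. x \<in> A \<and> length x = n} \<union> {x. x \<in> B \<and> length x = n}"
    by auto
  thus "wgf f (A \<union> B) $ n = (wgf f A + wgf f B) $ n"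
    using assms by (simp add: wgf_nth sum.union_disjoint finite_words_of_length disjoint_iff)
qed

lemma wgf_lang_prod:
  fixes A B :: "'a::finite list set"
  assumes unamb: "inj_on (\<lambda>(a, b). a @ b) (A \<times> B)"
    and mult: "\<And>a b. a \<in> A \<Longrightarrow> b \<in> B \<Longrightarrow> f (a @ b) = g a * h b"
  shows "wgf f (lang_prod A B) = wgf g A * wgf h B"
proof (rule fps_ext)
  fix n
  let ?P = "{(a, b). a \<in> A \<and> b \<in> B \<and> length a + length b = n}"
  have "{x. x \<in> lang_prod A B \<and> length x = n} = (\<lambda>(a, b). a @ b) ` ?P"
    by (auto simp: lang_prod_def)
  hence "wgf f (lang_prod A B) $ n = (\<Sum>x\<in>(\<lambda>(a, b). a @ b) ` ?P. f x)" by (simp add: wgf_nth)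
  also have "\<dots> = (\<Sum>(a, b)\<in>?P. f (a @ b))"
    by (subst sum.reindex) (auto intro: inj_on_subset[OF unamb] simp: case_prod_beta)
  also have "\<dots> = (\<Sum>(a, b)\<in>?P. g a * h b)"
    by (rule sum.cong) (auto simp: mult)
  also have "?P = (\<Union>i\<in>{0..n}. {a. a \<in> A \<and> length a = i} \<times> {b. b \<in> B \<and> length b = n - i})"
    by auto
  also have "(\<Sum>(a, b)\<in>\<dots>. g a * h b) =
      (\<Sum>i\<in>{0..n}. \<Sum>(a, b)\<in>{a. a \<in> A \<and> length a = i} \<times> {b. b \<in> B \<and> length b = n - i}. g a * h b)"
    by (rule sum.UNION_disjoint) (auto simp: finite_words_of_length)
  also have "\<dots> = (wgf g A * wgf h B) $ n"
    by (simp add: fps_mult_nth wgf_nth sum_product sum.cartesian_product)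
  finally show "wgf f (lang_prod A B) $ n = (wgf g A * wgf h B) $ n" .
qed

lemma prob_append: "prob p (a @ b) = prob p a * prob p b"
  by (simp add: prob_def)

lemma prob_pos: "(\<And>a. p a > 0) \<Longrightarrow> prob p v > 0"
  by (induction v) (auto simp: prob_def)

lemma occs_iff: "i \<in> occs w T \<longleftrightarrow> (\<exists>x y. T = x @ w @ y \<and> length x = i)"
proof
  assume "i \<in> occs w T"
  hence h: "i + length w \<le> length T" "take (length w) (drop i T) = w" by (auto simp: occs_def)
  have "T = take i T @ take (length w) (drop i T) @ drop (length w) (drop i T)"
    by (metis append_take_drop_id)
  hence "T = take i T @ w @ drop (length w) (drop i T)" using h by simp
  moreover have "length (take i T) = i" using h by simp
  ultimately show "\<exists>x y. T = x @ w @ y \<and> length x = i" by blast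
qed (auto simp: occs_def)

lemma occsI: "T = x @ w @ y \<Longrightarrow> length x \<in> occs w T"
  by (auto simp: occs_def)

lemma occsE: assumes "i \<in> occs w T" obtains x y where "T = x @ w @ y" "length x = i"
  using assms occs_iff by blast

lemma occs_bound: "i \<in> occs w T \<Longrightarrow> i + length w \<le> length T"
  by (auto simp: occs_def)

lemma finite_occs: "finite (occs w T)"
  by (rule finite_subset[of _ "{..length T}"]) (auto simp: occs_def)

lemma occs_append_left: "i \<in> occs w S \<Longrightarrow> i \<in> occs w (S @ v)"
  by (auto simp: occs_def)

lemma occs_append_left_back: "i \<in> occs w (S @ v) \<Longrightarrow> i + length w \<le> length S \<Longrightarrow> i \<in> occs w S"
  by (auto simp: occs_def)

lemma occs_shift: "length Q + k \<in> occs w (Q @ U) \<longleftrightarrow> k \<in> occs w U"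
  by (auto simp: occs_def)

definition words_ending :: "'a list \<Rightarrow> 'a list set" where
  "words_ending w = {S. \<exists>x. S = x @ w}"

lemma words_ending_iff:
  "S \<in> words_ending w \<longleftrightarrow> length w \<le> length S \<and> length S - length w \<in> occs w S"
proof
  assume "S \<in> words_ending w"
  then obtain x where x: "S = x @ w" unfolding words_ending_def by blast
  thus "length w \<le> length S \<and> length S - length w \<in> occs w S"
    using occsI[of S x w "[]"] by simp
next
  assume h: "length w \<le> length S \<and> length S - length w \<in> occs w S"
  then obtain x y where "S = x @ w @ y" "length x = length S - length w" by (blast elim: occsE)
  thus "S \<in> words_ending w" using h by (auto simp: words_ending_def)
qed

lemma words_ending_length: "S \<in> words_ending w \<Longrightarrow> length w \<le> length S"
  by (simp add: words_ending_iff)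

lemma words_ending_split: "S \<in> words_ending w \<Longrightarrow> S = take (length S - length w) S @ w"
  by (auto simp: words_ending_def)

lemma words_ending_last_occ:
  assumes "S \<in> words_ending w" shows "Max (occs w S) = length S - length w"
proof (rule Max_eqI)
  show "length S - length w \<in> occs w S" using assms by (simp add: words_ending_iff)
qed (auto simp: finite_occs dest: occs_bound)

lemma Nset_iff: "T \<in> Nset w \<longleftrightarrow> occs w T = {}"
proof
  assume "T \<in> Nset w"
  thus "occs w T = {}" by (auto simp: Nset_def elim!: occsE)
next
  assume h: "occs w T = {}"
  show "T \<in> Nset w" unfolding Nset_def
  proof (clarsimp)
    fix x y assume "T = x @ w @ y"
    from occsI[OF this] h show False by simp
  qed
qed

lemma Uset_iff: "v \<in> Uset w \<longleftrightarrow> (\<forall>k\<in>occs w (w @ v). k = 0)"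
proof
  assume "v \<in> Uset w"
  thus "\<forall>k\<in>occs w (w @ v). k = 0" by (auto simp: Uset_def elim!: occsE)
next
  assume h: "\<forall>k\<in>occs w (w @ v). k = 0"
  show "v \<in> Uset w" unfolding Uset_def
  proof (clarsimp)
    fix x y assume "w @ v = x @ w @ y" "x \<noteq> []"
    from occsI[OF this(1)] h this(2) show False by auto
  qed
qed

lemma Rset_iff: "r \<in> Rset w \<longleftrightarrow> r \<in> words_ending w \<and> (\<forall>k\<in>occs w r. k + length w = length r)"
proof -
  have "(\<not> (\<exists>x y. r = x @ w @ y \<and> y \<noteq> [])) \<longleftrightarrow> (\<forall>k\<in>occs w r. k + length w = length r)"
  proof
    assume h: "\<not> (\<exists>x y. r = x @ w @ y \<and> y \<noteq> [])"
    show "\<forall>k\<in>occs w r. k + length w = length r"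
    proof
      fix k assume "k \<in> occs w r"
      then obtain x y where "r = x @ w @ y" "length x = k" by (rule occsE)
      thus "k + length w = length r" using h by auto
    qed
  next
    assume h: "\<forall>k\<in>occs w r. k + length w = length r"
    show "\<not> (\<exists>x y. r = x @ w @ y \<and> y \<noteq> [])"
    proof
      assume "\<exists>x y. r = x @ w @ y \<and> y \<noteq> []"
      then obtain x y where xy: "r = x @ w @ y" "y \<noteq> []" by blast
      from occsI[OF xy(1)] h xy show False by auto
    qed
  qed
  thus ?thesis by (auto simp: Rset_def words_ending_def)
qed

lemma Mset_iff: "m \<in> Mset w \<longleftrightarrow> m \<noteq> [] \<and> length m \<in> occs w (w @ m) \<and>
   (\<forall>k\<in>occs w (w @ m). k = 0 \<or> k = length m)"
proof -
  have ends: "(\<exists>x. w @ m = x @ w) \<longleftrightarrow> length m \<in> occs w (w @ m)"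
    using words_ending_iff[of "w @ m" w] by (simp add: words_ending_def)
  have len: "x = [] \<or> y = [] \<longleftrightarrow> length x = 0 \<or> length x = length m"
    if "w @ m = x @ w @ y" for x y
  proof -
    have "length w + length m = length x + length w + length y" using arg_cong[OF that, of length] by simp
    thus ?thesis by auto
  qed
  have inner: "(\<nexists>x y. w @ m = x @ w @ y \<and> x \<noteq> [] \<and> y \<noteq> []) \<longleftrightarrow>
      (\<forall>k\<in>occs w (w @ m). k = 0 \<or> k = length m)"
  proof
    assume h: "\<nexists>x y. w @ m = x @ w @ y \<and> x \<noteq> [] \<and> y \<noteq> []"
    show "\<forall>k\<in>occs w (w @ m). k = 0 \<or> k = length m"
    proof
      fix k assume "k \<in> occs w (w @ m)"
      then obtain x y where xy: "w @ m = x @ w @ y" "length x = k" by (rule occsE)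
      thus "k = 0 \<or> k = length m" using h len[OF xy(1)] by blast
    qed
  next
    assume h: "\<forall>k\<in>occs w (w @ m). k = 0 \<or> k = length m"
    show "\<nexists>x y. w @ m = x @ w @ y \<and> x \<noteq> [] \<and> y \<noteq> []"
    proof (intro notI, elim exE conjE)
      fix x y assume xy: "w @ m = x @ w @ y" "x \<noteq> []" "y \<noteq> []"
      thus False using h occsI[OF xy(1)] len[OF xy(1)] by blast
    qed
  qed
  show ?thesis using ends inner by (auto simp: Mset_def)
qed

lemma Mset_nonempty: "m \<in> Mset w \<Longrightarrow> m \<noteq> []"
  by (simp add: Mset_def)

lemma autocorr0_iff: "e \<in> autocorr0 w \<longleftrightarrow> e \<noteq> [] \<and> length e < length w \<and> (\<exists>x. w @ e = x @ w)"
proof -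
  have "(\<exists>x. x \<noteq> [] \<and> w @ e = x @ w) \<longleftrightarrow> (\<exists>x. w @ e = x @ w)" if "e \<noteq> []"
  proof
    assume "\<exists>x. w @ e = x @ w"
    then obtain x where x: "w @ e = x @ w" by blast
    hence "length (w @ e) = length (x @ w)" by simp
    hence "length x = length e" by simp
    thus "\<exists>x. x \<noteq> [] \<and> w @ e = x @ w" using x that by auto
  qed blast
  thus ?thesis by (auto simp: autocorr0_def autocorr_def)
qed

text \<open>K consists of the minimal elements of the autocorrelation set, which are exactly the
  elements of M shorter than w: a non-minimal one would exhibit an inner occurrence.\<close>
lemma Kset_eq: "Kset w = {m \<in> Mset w. length m < length w}"
proof (rule set_eqI, rule iffI)
  fix k assume k: "k \<in> Kset w"
  hence kac: "k \<in> autocorr0 w" and nd: "\<not> (\<exists>c v. k = c @ v \<and> c \<in> autocorr0 w \<and> v \<noteq> [])"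
    by (auto simp: Kset_def)
  from kac have k1: "k \<noteq> []" "length k < length w" "\<exists>x. w @ k = x @ w" by (auto simp: autocorr0_iff)
  have "\<not> (\<exists>x y. w @ k = x @ w @ y \<and> x \<noteq> [] \<and> y \<noteq> [])"
  proof
    assume "\<exists>x y. w @ k = x @ w @ y \<and> x \<noteq> [] \<and> y \<noteq> []"
    then obtain x y where xy: "w @ k = x @ w @ y" "x \<noteq> []" "y \<noteq> []" by blast
    have len: "length w + length k = length x + length w + length y" using arg_cong[OF xy(1), of length] by simp
    hence lx: "length x < length k" using xy(3) by simp
    have "take (length x + length w) (w @ k) = take (length x + length w) (x @ w @ y)" using xy(1) by simp
    hence "w @ take (length x) k = x @ w" by (simp add: add.commute)
    hence "take (length x) k \<in> autocorr0 w" using xy(2) lx k1(2) by (auto simp: autocorr0_iff)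
    moreover have "k = take (length x) k @ drop (length x) k" by simp
    moreover have "drop (length x) k \<noteq> []" using lx by simp
    ultimately show False using nd by blast
  qed
  thus "k \<in> {m \<in> Mset w. length m < length w}" using k1 by (auto simp: Mset_def)
next
  fix m assume "m \<in> {m \<in> Mset w. length m < length w}"
  hence m: "m \<in> Mset w" "length m < length w" by auto
  hence mac: "m \<in> autocorr0 w" by (auto simp: Mset_def autocorr0_iff)
  have "\<not> (\<exists>c v. m = c @ v \<and> c \<in> autocorr0 w \<and> v \<noteq> [])"
  proof
    assume "\<exists>c v. m = c @ v \<and> c \<in> autocorr0 w \<and> v \<noteq> []"
    then obtain c v where cv: "m = c @ v" "c \<in> autocorr0 w" "v \<noteq> []" by blast
    then obtain e' where e': "e' \<noteq> []" "w @ c = e' @ w" by (auto simp: autocorr0_def autocorr_def)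
    hence "w @ m = e' @ w @ v" using cv by simp
    thus False using m(1) e' cv(3) by (auto simp: Mset_def)
  qed
  thus "m \<in> Kset w" using mac by (auto simp: Kset_def)
qed
lemma Kset_subset_Mset: "Kset w \<subseteq> Mset w"
  by (auto simp: Kset_eq)

text \<open>Every nonempty autocorrelation word is a concatenation of minimal ones: if e = c v with
  c in the autocorrelation set, then v is one too.\<close>
lemma autocorr0_concat_Kset: "e \<in> autocorr0 w \<Longrightarrow> \<exists>ks. set ks \<subseteq> Kset w \<and> e = concat ks"
proof (induction "length e" arbitrary: e rule: less_induct)
  case less
  show ?case
  proof (cases "e \<in> Kset w")
    case True thus ?thesis by (intro exI[of _ "[e]"]) simp
  next
    case False
    then obtain c v where cv: "e = c @ v" "c \<in> autocorr0 w" "v \<noteq> []"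
      using less.prems by (auto simp: Kset_def)
    have e1: "e \<noteq> []" "length e < length w" "\<exists>x. w @ e = x @ w" using less.prems by (auto simp: autocorr0_iff)
    have c1: "c \<noteq> []" "\<exists>x. w @ c = x @ w" using cv(2) by (auto simp: autocorr0_iff)
    obtain e' where e': "w @ e = e' @ w" using e1 by blast
    obtain c' where c': "w @ c = c' @ w" using c1 by blast
    have lc': "length c' = length c" using arg_cong[OF c', of length] by simp
    have le': "length e' = length e" using arg_cong[OF e', of length] by simp
    have "c' @ (w @ v) = (w @ c) @ v" using c' by simp
    also have "\<dots> = e' @ w" using e' cv(1) by simp
    finally have "c' @ (w @ v) = e' @ w" .
    hence "drop (length c) (c' @ (w @ v)) = drop (length c) (e' @ w)" by simp
    hence "w @ v = drop (length c) e' @ w" using lc' le' cv(1) by simp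
    hence vac: "v \<in> autocorr0 w" using cv e1 by (auto simp: autocorr0_iff)
    have "length c < length e" "length v < length e" using cv c1 by auto
    then obtain ks1 ks2 where "set ks1 \<subseteq> Kset w" "c = concat ks1" "set ks2 \<subseteq> Kset w" "v = concat ks2"
      using less.hyps cv(2) vac by meson
    thus ?thesis using cv(1) by (intro exI[of _ "ks1 @ ks2"]) auto
  qed
qed

lemma clump_words_Kset: "clump_words w = {w @ concat ks | ks. set ks \<subseteq> Kset w}"
proof (rule set_eqI, rule iffI)
  fix c assume "c \<in> clump_words w"
  then obtain cs where c: "c = w @ concat cs" "set cs \<subseteq> autocorr w" by (auto simp: clump_words_def)
  have "\<exists>ks. set ks \<subseteq> Kset w \<and> concat cs = concat ks" using c(2)
  proof (induction cs)
    case Nil thus ?case by (intro exI[of _ "[]"]) simp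
  next
    case (Cons e cs)
    then obtain ks where ks: "set ks \<subseteq> Kset w" "concat cs = concat ks" by auto
    have "e \<in> autocorr w" using Cons.prems by simp
    hence "e = [] \<or> e \<in> autocorr0 w" by (auto simp: autocorr0_def)
    thus ?case
    proof
      assume "e = []" thus ?case using ks by auto
    next
      assume "e \<in> autocorr0 w"
      then obtain ks' where "set ks' \<subseteq> Kset w" "e = concat ks'" using autocorr0_concat_Kset by blast
      thus ?case using ks by (intro exI[of _ "ks' @ ks"]) auto
    qed
  qed
  thus "c \<in> {w @ concat ks | ks. set ks \<subseteq> Kset w}" using c(1) by auto
next
  fix c assume "c \<in> {w @ concat ks | ks. set ks \<subseteq> Kset w}"
  moreover have "Kset w \<subseteq> autocorr w" by (auto simp: Kset_def autocorr0_def)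
  ultimately show "c \<in> clump_words w" by (auto simp: clump_words_def)
qed

section \<open>Counting clumps when a rightmost occurrence is added\<close>

definition ovl :: "nat \<Rightarrow> nat set \<Rightarrow> (nat \<times> nat) set" where
  "ovl l Q = {(i, k). i \<in> Q \<and> k \<in> Q \<and> {i..<i + l} \<inter> {k..<k + l} \<noteq> {}}"

lemma cl_eq_ovl: "cl w T = card (occs w T // (ovl (length w) (occs w T))\<^sup>+)"
  by (simp add: cl_def overlap_rel_def ovl_def)

lemma ovl_iff: "(i,k) \<in> ovl l Q \<longleftrightarrow> i \<in> Q \<and> k \<in> Q \<and> i < k + l \<and> k < i + l"
proof -
  have "{i..<i + l} \<inter> {k..<k + l} \<noteq> {} \<longleftrightarrow> i < k + l \<and> k < i + l"
  proof
    assume "{i..<i + l} \<inter> {k..<k + l} \<noteq> {}"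
    then obtain z where "z \<in> {i..<i + l}" "z \<in> {k..<k + l}" by blast
    thus "i < k + l \<and> k < i + l" by auto
  next
    assume "i < k + l \<and> k < i + l"
    hence "max i k \<in> {i..<i + l} \<inter> {k..<k + l}" by auto
    thus "{i..<i + l} \<inter> {k..<k + l} \<noteq> {}" by blast
  qed
  thus ?thesis by (auto simp: ovl_def)
qed

lemma equiv_ovl: assumes "l > 0" shows "equiv Q ((ovl l Q)\<^sup>+)"
proof (rule equivI)
  have sub: "ovl l Q \<subseteq> Q \<times> Q" by (auto simp: ovl_iff)
  show "(ovl l Q)\<^sup>+ \<subseteq> Q \<times> Q" using trancl_subset_Sigma[OF sub] .
  show "refl_on Q ((ovl l Q)\<^sup>+)"
  proof (rule refl_onI)
    fix x assume "x \<in> Q" thus "(x, x) \<in> (ovl l Q)\<^sup>+" using assms by (auto simp: ovl_iff)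
  qed
  show "sym ((ovl l Q)\<^sup>+)" by (rule sym_trancl) (auto simp: sym_def ovl_iff)
  show "trans ((ovl l Q)\<^sup>+)" by (rule trans_trancl)
qed

lemma trancl_map_edges:
  assumes "\<And>a b. (a, b) \<in> r \<Longrightarrow> (\<pi> a, \<pi> b) \<in> s" and "(a, b) \<in> r\<^sup>+"
  shows "(\<pi> a, \<pi> b) \<in> s\<^sup>+"
  using assms(2)
proof (induction rule: trancl_induct)
  case (base y) thus ?case using assms(1) by blast
next
  case (step y z) thus ?case using assms(1) by (meson trancl_into_trancl)
qed

lemma card_image_factor:
  assumes fin: "finite Q" and fac: "\<And>x y. x \<in> Q \<Longrightarrow> y \<in> Q \<Longrightarrow> g x = g y \<Longrightarrow> f x = f y"
  shows "card (f ` Q) \<le> card (g ` Q)"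
proof -
  have "f x = f (inv_into Q g (g x))" if "x \<in> Q" for x
    using fac[of x "inv_into Q g (g x)"] that inv_into_into[of "g x" g Q] f_inv_into_f[of "g x" g Q]
    by auto
  hence "f ` Q = (\<lambda>C. f (inv_into Q g C)) ` (g ` Q)"
    unfolding image_image by (rule image_cong[OF refl])
  thus ?thesis using card_image_le fin by (metis finite_imageI)
qed

lemma card_quotient_insert:
  assumes eq': "equiv (insert j Q) S'" and eq: "equiv Q S" and fin: "finite Q" and new: "j \<notin> Q"
    and restrict: "\<And>a b. a \<in> Q \<Longrightarrow> b \<in> Q \<Longrightarrow> (a, b) \<in> S' \<longleftrightarrow> (a, b) \<in> S"
  shows "card (insert j Q // S') = card (Q // S) + (if \<exists>i\<in>Q. (j, i) \<in> S' then 0 else 1)"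
proof -
  let ?f = "\<lambda>x. S' `` {x}" and ?g = "\<lambda>x. S `` {x}"
  have same_class: "?f a = ?f b \<longleftrightarrow> ?g a = ?g b" if "a \<in> Q" "b \<in> Q" for a b
    using eq_equiv_class_iff[OF eq'] eq_equiv_class_iff[OF eq] restrict that by auto
  have "Q // S = ?g ` Q" by (auto simp: quotient_def)
  hence same: "card (?f ` Q) = card (Q // S)"
    using card_image_factor[of Q ?g ?f] card_image_factor[of Q ?f ?g] fin same_class by simp
  have quot: "insert j Q // S' = insert (?f j) (?f ` Q)"
    by (auto simp: quotient_def)
  have joins: "?f j \<in> ?f ` Q \<longleftrightarrow> (\<exists>i\<in>Q. (j, i) \<in> S')"
    using eq_equiv_class_iff[OF eq'] by blast
  show ?thesis
    using quot same joins fin by (auto simp: insert_absorb)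
qed

text \<open>A path in the overlap graph between old positions never needs a new rightmost
  position j: a window meeting that of j also meets the window of the largest old position.\<close>
lemma ovl_trancl_insert_restrict:
  assumes fin: "finite Q" and lt: "\<And>i. i \<in> Q \<Longrightarrow> i < j" and l: "l > 0"
    and ab: "a \<in> Q" "b \<in> Q" "(a, b) \<in> (ovl l (insert j Q))\<^sup>+"
  shows "(a, b) \<in> (ovl l Q)\<^sup>+"
proof -
  define m where "m = Max Q"
  have m: "m \<in> Q" "\<And>i. i \<in> Q \<Longrightarrow> i \<le> m"
    using Max_in[OF fin] Max_ge[OF fin] ab(1) unfolding m_def by blast+
  have mj: "m < j" using lt[OF m(1)] .
  define \<pi> where "\<pi> i = (if i = j then m else i)" for i
  have edges: "(\<pi> i, \<pi> k) \<in> ovl l Q" if "(i, k) \<in> ovl l (insert j Q)" for i k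
    using that m(1) m(2)[of i] m(2)[of k] mj l by (auto simp: \<pi>_def ovl_iff)
  have "(\<pi> a, \<pi> b) \<in> (ovl l Q)\<^sup>+"
    by (rule trancl_map_edges[where \<pi> = \<pi>, OF edges ab(3)])
  moreover have "a \<noteq> j" "b \<noteq> j" using ab lt by blast+
  ultimately show ?thesis by (simp add: \<pi>_def)
qed

lemma ovl_trancl_insert_joins:
  assumes fin: "finite Q" and lt: "\<And>i. i \<in> Q \<Longrightarrow> i < j"
  shows "(\<exists>i\<in>Q. (j, i) \<in> (ovl l (insert j Q))\<^sup>+) \<longleftrightarrow> \<not> (\<forall>i\<in>Q. i + l \<le> j)"
proof
  assume "\<exists>i\<in>Q. (j, i) \<in> (ovl l (insert j Q))\<^sup>+"
  then obtain i where i: "i \<in> Q" "(j, i) \<in> (ovl l (insert j Q))\<^sup>+" by blast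
  show "\<not> (\<forall>i\<in>Q. i + l \<le> j)"
  proof
    assume sep: "\<forall>i\<in>Q. i + l \<le> j"
    have "k = j" if "(j, k) \<in> (ovl l (insert j Q))\<^sup>+" for k
      using that by (induction rule: trancl_induct) (use sep in \<open>auto simp: ovl_iff\<close>)
    thus False using i lt by fastforce
  qed
next
  assume "\<not> (\<forall>i\<in>Q. i + l \<le> j)"
  then obtain i where i: "i \<in> Q" "j < i + l" by force
  define m where "m = Max Q"
  have m: "m \<in> Q" "i \<le> m" using Max_in[OF fin] Max_ge[OF fin] i(1) unfolding m_def by blast+
  hence "(j, m) \<in> ovl l (insert j Q)" using i lt[of m] by (auto simp: ovl_iff)
  thus "\<exists>i\<in>Q. (j, i) \<in> (ovl l (insert j Q))\<^sup>+" using m by blast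
qed

lemma card_clumps_insert_rightmost:
  assumes fin: "finite Q" and lt: "\<And>i. i \<in> Q \<Longrightarrow> i < j" and l: "l > 0"
  shows "card (insert j Q // (ovl l (insert j Q))\<^sup>+) =
         card (Q // (ovl l Q)\<^sup>+) + (if \<forall>i\<in>Q. i + l \<le> j then 1 else 0)"
proof -
  have mono: "ovl l Q \<subseteq> ovl l (insert j Q)" by (auto simp: ovl_iff)
  have "(a, b) \<in> (ovl l (insert j Q))\<^sup>+ \<longleftrightarrow> (a, b) \<in> (ovl l Q)\<^sup>+" if "a \<in> Q" "b \<in> Q" for a b
    using ovl_trancl_insert_restrict[OF fin lt l that] trancl_mono[OF _ mono] by blast
  moreover have "j \<notin> Q" using lt by blast
  ultimately show ?thesis
    using card_quotient_insert[OF equiv_ovl[OF l] equiv_ovl[OF l] fin] ovl_trancl_insert_joins[OF fin lt, of l]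
    by simp
qed

section \<open>The three unambiguous factorizations\<close>

lemma cut_after_occ:
  assumes i: "i \<in> occs w T"
  defines "v \<equiv> drop (i + length w) T"
  shows "take (i + length w) T \<in> words_ending w" "T = take (i + length w) T @ v"
    and "\<And>k. k \<in> occs w (w @ v) \<longleftrightarrow> i + k \<in> occs w T"
proof -
  have il: "i + length w \<le> length T" using occs_bound[OF i] .
  define P where "P = take i T"
  have lP: "length P = i" using il by (simp add: P_def)
  have "take (length w) (drop i T) = w" using i by (auto simp: occs_def)
  hence "drop i T = w @ v"
    using append_take_drop_id[of "length w" "drop i T"] by (simp add: v_def add.commute)
  hence T: "T = P @ w @ v" unfolding P_def by (metis append_take_drop_id)
  have "take (i + length w) T = P @ w" unfolding T using lP by simp
  thus "take (i + length w) T \<in> words_ending w" by (auto simp: words_ending_def)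
  show "T = take (i + length w) T @ v" by (simp add: v_def)
  show "k \<in> occs w (w @ v) \<longleftrightarrow> i + k \<in> occs w T" for k
    using occs_shift[of P k w "w @ v"] lP unfolding T by simp
qed

lemma occs_append_ending:
  assumes S: "S \<in> words_ending w" and i: "i \<in> occs w (S @ v)" "\<not> i + length w \<le> length S"
  obtains k where "i = length S - length w + k" "k \<in> occs w (w @ v)" "k \<noteq> 0"
proof -
  define Q where "Q = take (length S - length w) S"
  have SQ: "S = Q @ w" using words_ending_split[OF S] by (simp add: Q_def)
  hence "length Q \<le> i" using i by simp
  then obtain k where k: "i = length Q + k" using le_Suc_ex by blast
  hence "k \<in> occs w (w @ v)" using i SQ occs_shift[of Q k w "w @ v"] by simp
  moreover have "k \<noteq> 0" using i k SQ by auto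
  ultimately show thesis using k SQ that by simp
qed

lemma occs_append_Mset:
  assumes S: "S \<in> words_ending w" and m: "m \<in> Mset w"
  shows "occs w (S @ m) = insert (length S + length m - length w) (occs w S)"
proof (rule set_eqI, rule iffI)
  have lS: "length w \<le> length S" using words_ending_length[OF S] .
  fix i assume i: "i \<in> occs w (S @ m)"
  show "i \<in> insert (length S + length m - length w) (occs w S)"
  proof (cases "i + length w \<le> length S")
    case True thus ?thesis using occs_append_left_back[OF i] by simp
  next
    case False
    then obtain k where "i = length S - length w + k" "k \<in> occs w (w @ m)" "k \<noteq> 0"
      using occs_append_ending[OF S i] by blast
    thus ?thesis using m lS by (auto simp: Mset_iff)
  qed
next
  fix i assume "i \<in> insert (length S + length m - length w) (occs w S)"
  moreover have "length S + length m - length w \<in> occs w (S @ m)"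
  proof -
    define Q where "Q = take (length S - length w) S"
    have SQ: "S = Q @ w" using words_ending_split[OF S] by (simp add: Q_def)
    have "length Q + length m \<in> occs w (Q @ w @ m)"
      using m occs_shift[of Q "length m" w "w @ m"] by (simp add: Mset_iff)
    thus ?thesis using SQ by simp
  qed
  ultimately show "i \<in> occs w (S @ m)" using occs_append_left by blast
qed

lemma occs_before_Mset:
  assumes "m \<in> Mset w" "i \<in> occs w S" shows "i < length S + length m - length w"
  using occs_bound[OF assms(2)] Mset_nonempty[OF assms(1)] by (cases m) auto

lemma occs_append_Uset:
  assumes S: "S \<in> words_ending w" and v: "v \<in> Uset w"
  shows "occs w (S @ v) = occs w S"
proof (rule set_eqI, rule iffI)
  fix i assume i: "i \<in> occs w (S @ v)"
  show "i \<in> occs w S"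
  proof (cases "i + length w \<le> length S")
    case True thus ?thesis using occs_append_left_back[OF i] by simp
  next
    case False
    then obtain k where "k \<in> occs w (w @ v)" "k \<noteq> 0" using occs_append_ending[OF S i] by blast
    thus ?thesis using v by (auto simp: Uset_iff)
  qed
qed (rule occs_append_left)

lemma words_ending_decomp:
  assumes S: "S \<in> words_ending w" and R: "S \<notin> Rset w"
  obtains S' m where "S' \<in> words_ending w" "m \<in> Mset w" "S = S' @ m"
proof -
  let ?l = "length w" and ?O = "occs w S - {length S - length w}"
  from R S obtain k where k: "k \<in> occs w S" "k + ?l \<noteq> length S" by (auto simp: Rset_iff)
  have kO: "k \<in> ?O" using k occs_bound[OF k(1)] by auto
  have finO: "finite ?O" using finite_occs by blast
  define k0 where "k0 = Max ?O"
  have k0: "k0 \<in> ?O" "\<And>i. i \<in> ?O \<Longrightarrow> i \<le> k0"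
    using Max_in[OF finO] Max_ge[OF finO] kO unfolding k0_def by blast+
  have k0l: "k0 + ?l < length S" using k0(1) occs_bound[of k0 w S] by auto
  define m where "m = drop (k0 + ?l) S"
  note cut = cut_after_occ[of k0 w S, folded m_def]
  have lS: "length S = k0 + ?l + length m" using k0l by (simp add: m_def)
  have last: "length S - ?l \<in> occs w S" using S by (simp add: words_ending_iff)
  have "m \<in> Mset w" unfolding Mset_iff
  proof (intro conjI ballI)
    show "m \<noteq> []" using k0l by (simp add: m_def)
    show "length m \<in> occs w (w @ m)" using cut(3) k0 last lS by (simp add: add.commute)
  next
    fix k assume "k \<in> occs w (w @ m)"
    hence "k0 + k \<in> occs w S" using cut(3) k0 by simp
    thus "k = 0 \<or> k = length m" using k0(2)[of "k0 + k"] lS by fastforce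
  qed
  thus thesis using that cut(1,2) k0 by blast
qed

lemma text_decomp:
  assumes "T \<notin> Nset w"
  obtains S v where "S \<in> words_ending w" "v \<in> Uset w" "T = S @ v"
proof -
  have ne: "occs w T \<noteq> {}" using assms by (simp add: Nset_iff)
  define i where "i = Max (occs w T)"
  have i: "i \<in> occs w T" "\<And>k. k \<in> occs w T \<Longrightarrow> k \<le> i"
    using Max_in[OF finite_occs ne] Max_ge[OF finite_occs] unfolding i_def by blast+
  define v where "v = drop (i + length w) T"
  note cut = cut_after_occ[of i w T, folded v_def]
  have "v \<in> Uset w" unfolding Uset_iff
  proof
    fix k assume "k \<in> occs w (w @ v)"
    thus "k = 0" using cut(3) i by fastforce
  qed
  thus thesis using that cut(1,2) i by blast
qed

text \<open>Both cuts are unique, because the cut position is determined by the last occurrences.\<close>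
lemma words_ending_Mset_unique:
  assumes "S1 \<in> words_ending w" "m1 \<in> Mset w" "S2 \<in> words_ending w" "m2 \<in> Mset w" "S1 @ m1 = S2 @ m2"
  shows "S1 = S2 \<and> m1 = m2"
proof -
  have key: "Max (occs w (S @ m) - {length (S @ m) - length w}) = length S - length w"
    if "S \<in> words_ending w" "m \<in> Mset w" for S m
  proof -
    have "length S + length m - length w \<notin> occs w S" using occs_before_Mset[OF that(2)] by blast
    hence "occs w (S @ m) - {length (S @ m) - length w} = occs w S"
      using occs_append_Mset[OF that] words_ending_length[OF that(1)] by auto
    thus ?thesis using words_ending_last_occ[OF that(1)] by simp
  qed
  have "length S1 - length w = length S2 - length w" using key[OF assms(1,2)] key[OF assms(3,4)] assms(5) by simp
  hence "length S1 = length S2" using words_ending_length[OF assms(1)] words_ending_length[OF assms(3)] by linarith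
  thus ?thesis using assms(5) by simp
qed

lemma words_ending_Uset_unique:
  assumes "S1 \<in> words_ending w" "v1 \<in> Uset w" "S2 \<in> words_ending w" "v2 \<in> Uset w" "S1 @ v1 = S2 @ v2"
  shows "S1 = S2 \<and> v1 = v2"
proof -
  have "length S1 - length w = length S2 - length w"
    using words_ending_last_occ[OF assms(1)] words_ending_last_occ[OF assms(3)]
      occs_append_Uset[OF assms(1,2)] occs_append_Uset[OF assms(3,4)] assms(5)
    by simp
  hence "length S1 = length S2" using words_ending_length[OF assms(1)] words_ending_length[OF assms(3)] by linarith
  thus ?thesis using assms(5) by simp
qed

lemma text_factorization:
  "UNIV = Nset w \<union> lang_prod (words_ending w) (Uset w)"
  "Nset w \<inter> lang_prod (words_ending w) (Uset w) = {}"
  "inj_on (\<lambda>(a, b). a @ b) (words_ending w \<times> Uset w)"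
proof -
  show "UNIV = Nset w \<union> lang_prod (words_ending w) (Uset w)"
  proof (rule set_eqI, rule iffI)
    fix T :: "'a list"
    show "T \<in> Nset w \<union> lang_prod (words_ending w) (Uset w)"
    proof (cases "T \<in> Nset w")
      case False
      then obtain S v where "S \<in> words_ending w" "v \<in> Uset w" "T = S @ v" by (rule text_decomp)
      thus ?thesis by (auto simp: lang_prod_def)
    qed simp
  qed simp
  have "S @ v \<notin> Nset w" if "S \<in> words_ending w" "v \<in> Uset w" for S v
    using occs_append_Uset[OF that] that(1) by (auto simp: Nset_iff words_ending_iff)
  thus "Nset w \<inter> lang_prod (words_ending w) (Uset w) = {}" by (auto simp: lang_prod_def)
  show "inj_on (\<lambda>(a, b). a @ b) (words_ending w \<times> Uset w)"
    by (rule inj_onI, clarify) (blast dest: words_ending_Uset_unique)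
qed

lemma words_ending_factorization:
  "words_ending w = Rset w \<union> lang_prod (words_ending w) (Mset w)"
  "Rset w \<inter> lang_prod (words_ending w) (Mset w) = {}"
  "inj_on (\<lambda>(a, b). a @ b) (words_ending w \<times> Mset w)"
proof -
  have closed: "S @ m \<in> words_ending w" if "S \<in> words_ending w" "m \<in> Mset w" for S m
    using occs_append_Mset[OF that] words_ending_length[OF that(1)] by (simp add: words_ending_iff)
  show "words_ending w = Rset w \<union> lang_prod (words_ending w) (Mset w)"
  proof (rule set_eqI, rule iffI)
    fix S assume S: "S \<in> words_ending w"
    show "S \<in> Rset w \<union> lang_prod (words_ending w) (Mset w)"
    proof (cases "S \<in> Rset w")
      case False
      then obtain S' m where "S' \<in> words_ending w" "m \<in> Mset w" "S = S' @ m"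
        using words_ending_decomp[OF S] by blast
      thus ?thesis by (auto simp: lang_prod_def)
    qed simp
  next
    fix S assume "S \<in> Rset w \<union> lang_prod (words_ending w) (Mset w)"
    thus "S \<in> words_ending w" using closed by (auto simp: Rset_iff lang_prod_def)
  qed
  have "S @ m \<notin> Rset w" if "S \<in> words_ending w" "m \<in> Mset w" for S m
  proof
    assume "S @ m \<in> Rset w"
    moreover have "length S - length w \<in> occs w (S @ m)"
      using that(1) by (simp add: words_ending_iff occs_append_left)
    ultimately have "length S - length w + length w = length S + length m" by (auto simp: Rset_iff)
    thus False using words_ending_length[OF that(1)] Mset_nonempty[OF that(2)] by simp
  qed
  thus "Rset w \<inter> lang_prod (words_ending w) (Mset w) = {}" by (auto simp: lang_prod_def)
  show "inj_on (\<lambda>(a, b). a @ b) (words_ending w \<times> Mset w)"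
    by (rule inj_onI, clarify) (blast dest: words_ending_Mset_unique)
qed

lemma clump_words_ending: "c \<in> clump_words w \<Longrightarrow> c \<in> words_ending w"
proof -
  have "set ks \<subseteq> Kset w \<Longrightarrow> w @ concat ks \<in> words_ending w" for ks
  proof (induction ks rule: rev_induct)
    case (snoc k ks)
    hence "w @ concat ks \<in> words_ending w" "k \<in> Mset w" using Kset_subset_Mset by auto
    hence "(w @ concat ks) @ k \<in> lang_prod (words_ending w) (Mset w)" by (rule lang_prodI)
    hence "(w @ concat ks) @ k \<in> words_ending w" using words_ending_factorization(1) by blast
    thus ?case by simp
  qed (auto simp: words_ending_def)
  thus "c \<in> clump_words w \<Longrightarrow> c \<in> words_ending w" by (auto simp: clump_words_Kset)
qed

lemma clump_factorization:
  "clump_words w = {w} \<union> lang_prod (clump_words w) (Kset w)"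
  "{w} \<inter> lang_prod (clump_words w) (Kset w) = {}"
  "inj_on (\<lambda>(a, b). a @ b) (clump_words w \<times> Kset w)"
proof -
  show "clump_words w = {w} \<union> lang_prod (clump_words w) (Kset w)"
  proof (rule set_eqI, rule iffI)
    fix c assume "c \<in> clump_words w"
    then obtain ks where c: "c = w @ concat ks" "set ks \<subseteq> Kset w" by (auto simp: clump_words_Kset)
    show "c \<in> {w} \<union> lang_prod (clump_words w) (Kset w)"
    proof (cases ks rule: rev_cases)
      case (snoc ks' k)
      hence "w @ concat ks' \<in> clump_words w" "k \<in> Kset w" "c = (w @ concat ks') @ k"
        using c by (auto simp: clump_words_Kset)
      thus ?thesis using lang_prodI by blast
    qed (use c in simp)
  next
    fix c assume "c \<in> {w} \<union> lang_prod (clump_words w) (Kset w)"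
    thus "c \<in> clump_words w"
    proof
      assume "c \<in> lang_prod (clump_words w) (Kset w)"
      then obtain a k where ak: "c = a @ k" "a \<in> clump_words w" "k \<in> Kset w"
        by (auto simp: lang_prod_def)
      then obtain ks where "a = w @ concat ks" "set ks \<subseteq> Kset w" by (auto simp: clump_words_Kset)
      thus ?thesis using ak by (auto simp: clump_words_Kset intro!: exI[of _ "ks @ [k]"])
    qed (auto simp: clump_words_Kset intro: exI[of _ "[]"])
  qed
  have "a @ k \<noteq> w" if "a \<in> clump_words w" "k \<in> Kset w" for a k
  proof -
    have "length w \<le> length a" using words_ending_length[OF clump_words_ending[OF that(1)]] .
    moreover have "k \<noteq> []" using that(2) Kset_subset_Mset Mset_nonempty by blast
    ultimately show ?thesis by (metis add_le_same_cancel1 le_zero_eq length_0_conv length_append)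
  qed
  thus "{w} \<inter> lang_prod (clump_words w) (Kset w) = {}" by (auto simp: lang_prod_def)
  show "inj_on (\<lambda>(a, b). a @ b) (clump_words w \<times> Kset w)"
  proof (rule inj_onI, clarify)
    fix a k a' k' assume h: "a \<in> clump_words w" "k \<in> Kset w" "a' \<in> clump_words w" "k' \<in> Kset w"
      "a @ k = a' @ k'"
    thus "a = a' \<and> k = k'"
      using words_ending_Mset_unique[OF clump_words_ending[OF h(1)] _ clump_words_ending[OF h(3)]]
        Kset_subset_Mset by blast
  qed
qed

section \<open>How the statistics change along the factorizations\<close>

lemma occ_cl_append_Mset:
  assumes S: "S \<in> words_ending w" and m: "m \<in> Mset w" and w: "w \<noteq> []"
  shows "occ w (S @ m) = Suc (occ w S)"
    and "cl w (S @ m) = cl w S + (if length w \<le> length m then 1 else 0)"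
proof -
  let ?l = "length w" and ?O = "occs w S" and ?j = "length S + length m - length w"
  have oc: "occs w (S @ m) = insert ?j ?O" by (rule occs_append_Mset[OF S m])
  have lt: "\<And>i. i \<in> ?O \<Longrightarrow> i < ?j" using occs_before_Mset[OF m] by blast
  have "?j \<notin> ?O" using lt by blast
  thus "occ w (S @ m) = Suc (occ w S)" using oc finite_occs[of w S] by (simp add: occ_def)
  have lS: "?l \<le> length S" using words_ending_length[OF S] .
  have last: "length S - ?l \<in> ?O" using S by (simp add: words_ending_iff)
  have "(\<forall>i\<in>?O. i + ?l \<le> ?j) \<longleftrightarrow> ?l \<le> length m"
  proof
    assume "\<forall>i\<in>?O. i + ?l \<le> ?j"
    hence "length S - ?l + ?l \<le> ?j" using last by blast
    thus "?l \<le> length m" using lS by simp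
  next
    assume "?l \<le> length m"
    thus "\<forall>i\<in>?O. i + ?l \<le> ?j" using occs_bound[of _ w S] by fastforce
  qed
  thus "cl w (S @ m) = cl w S + (if length w \<le> length m then 1 else 0)"
    using card_clumps_insert_rightmost[of ?O ?j ?l, OF finite_occs lt] oc w by (simp add: cl_eq_ovl)
qed

lemma cov_append_Mset:
  assumes S: "S \<in> words_ending w" and m: "m \<in> Mset w"
  shows "cov w (S @ m) = cov w S + min (length m) (length w)"
proof -
  let ?l = "length w" and ?O = "occs w S" and ?j = "length S + length m - length w"
  let ?U = "\<Union>i\<in>?O. {i..<i + ?l}"
  have lS: "?l \<le> length S" using words_ending_length[OF S] .
  have U_below: "?U \<subseteq> {..<length S}" using occs_bound[of _ w S] by fastforce
  have U_end: "{length S - ?l..<length S} \<subseteq> ?U"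
    using S lS by (fastforce simp: words_ending_iff)
  have new: "{?j..<?j + ?l} - ?U = {max ?j (length S)..<?j + ?l}"
  proof (rule set_eqI, rule iffI)
    fix z assume z: "z \<in> {?j..<?j + ?l} - ?U"
    hence "z \<notin> {length S - ?l..<length S}" using U_end by blast
    thus "z \<in> {max ?j (length S)..<?j + ?l}" using z by auto
  next
    fix z assume z: "z \<in> {max ?j (length S)..<?j + ?l}"
    have "z \<notin> ?U"
    proof
      assume "z \<in> ?U"
      hence "z \<in> {..<length S}" using U_below by (rule subsetD[rotated])
      thus False using z by simp
    qed
    thus "z \<in> {?j..<?j + ?l} - ?U" using z by auto
  qed
  have "cov w (S @ m) = card ({?j..<?j + ?l} \<union> ?U)"
    using occs_append_Mset[OF S m] by (simp add: cov_def)
  also have "{?j..<?j + ?l} \<union> ?U = ?U \<union> ({?j..<?j + ?l} - ?U)" by blast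
  also have "card \<dots> = card ?U + card ({?j..<?j + ?l} - ?U)"
    by (rule card_Un_disjoint) (auto simp: finite_occs)
  also have "card ({?j..<?j + ?l} - ?U) = min (length m) ?l" using new lS by simp
  finally show ?thesis by (simp add: cov_def)
qed

lemma stats_Rset:
  assumes r: "r \<in> Rset w"
  shows "occ w r = 1" "cov w r = length w" "cl w r = 1"
proof -
  have rE: "r \<in> words_ending w" and all: "\<forall>k\<in>occs w r. k + length w = length r"
    using r by (auto simp: Rset_iff)
  have lr: "length w \<le> length r" using words_ending_length[OF rE] .
  have oc: "occs w r = {length r - length w}" using all rE lr by (auto simp: words_ending_iff)
  show "occ w r = 1" using oc by (simp add: occ_def)
  show "cov w r = length w" using oc lr by (simp add: cov_def)
  show "cl w r = 1" using oc by (simp add: cl_def quotient_def)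
qed

lemma stats_Nset:
  assumes "T \<in> Nset w"
  shows "occ w T = 0" "cov w T = 0" "cl w T = 0"
  using assms by (auto simp: Nset_iff occ_def cov_def cl_def)

lemma stats_append_Uset:
  assumes "S \<in> words_ending w" "v \<in> Uset w"
  shows "occ w (S @ v) = occ w S" "cov w (S @ v) = cov w S" "cl w (S @ v) = cl w S"
  using occs_append_Uset[OF assms] by (simp_all add: occ_def cov_def cl_def overlap_rel_def)

section \<open>Equations between generating functions\<close>

definition text_weight :: "('a \<Rightarrow> real) \<Rightarrow> 'a list \<Rightarrow> real \<Rightarrow> real \<Rightarrow> real \<Rightarrow> 'a list \<Rightarrow> real" where
  "text_weight p w x t u T = prob p T * x ^ occ w T * t ^ cov w T * u ^ cl w T"

definition K_scaled :: "('a \<Rightarrow> real) \<Rightarrow> 'a list \<Rightarrow> real \<Rightarrow> real fps" where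
  "K_scaled p w t = fps_compose (gf p (Kset w)) (fps_const t * fps_X)"

lemma K_scaled_as_wgf: "K_scaled p w t = wgf (\<lambda>k. prob p k * t ^ length k) (Kset w)"
proof (rule fps_ext)
  fix n
  have "K_scaled p w t $ n = t ^ n * gf p (Kset w) $ n"
    by (simp add: K_scaled_def fps_compose_linear)
  also have "\<dots> = (\<Sum>k\<in>{k. k \<in> Kset w \<and> length k = n}. prob p k * t ^ length k)"
    by (simp add: gf_def sum_distrib_left mult.commute)
  finally show "K_scaled p w t $ n = wgf (\<lambda>k. prob p k * t ^ length k) (Kset w) $ n"
    by (simp add: wgf_nth)
qed

lemma Gser_as_wgf: "Gser p w x t u = wgf (text_weight p w x t u) UNIV"
  by (simp add: Gser_def wgf_def text_weight_def)

lemma clump_ser_as_wgf: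
  "clump_ser p w x t = wgf (\<lambda>c. prob p c * t ^ length c * x ^ occ w c) (clump_words w)"
  unfolding clump_ser_def wgf_def by (intro fps_ext) (auto intro!: sum.cong)

lemma w_in_Rset: "w \<in> Rset w"
  by (auto simp: Rset_iff words_ending_def dest: occs_bound)

lemma clump_equation:
  fixes w :: "'a::finite list"
  assumes w: "w \<noteq> []"
  shows "clump_ser p w x t = fps_const (x * prob p w * t ^ length w) * fps_X ^ length w +
           clump_ser p w x t * (fps_const x * K_scaled p w t)"
proof -
  define \<psi> where "\<psi> c = prob p c * t ^ length c * x ^ occ w c" for c
  have mult: "\<psi> (a @ k) = \<psi> a * (x * (prob p k * t ^ length k))"
    if "a \<in> clump_words w" "k \<in> Kset w" for a k
  proof -
    have "occ w (a @ k) = Suc (occ w a)"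
      using occ_cl_append_Mset(1)[OF clump_words_ending[OF that(1)] _ w] that(2) Kset_subset_Mset by blast
    thus ?thesis by (simp add: \<psi>_def prob_append power_add)
  qed
  have "wgf \<psi> (clump_words w) = wgf \<psi> {w} + wgf \<psi> (lang_prod (clump_words w) (Kset w))"
    by (subst clump_factorization(1)) (rule wgf_Un_disjoint[OF clump_factorization(2)])
  also have "wgf \<psi> {w} = fps_const (x * prob p w * t ^ length w) * fps_X ^ length w"
    using stats_Rset(1)[OF w_in_Rset[of w]] by (simp add: wgf_singleton \<psi>_def mult_ac)
  also have "wgf \<psi> (lang_prod (clump_words w) (Kset w)) =
      wgf \<psi> (clump_words w) * wgf (\<lambda>k. x * (prob p k * t ^ length k)) (Kset w)"
    by (rule wgf_lang_prod[where f = \<psi> and g = \<psi>, OF clump_factorization(3) mult])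
  finally show ?thesis
    by (simp add: clump_ser_as_wgf \<psi>_def[abs_def] K_scaled_as_wgf wgf_scale)
qed

text \<open>Factorization (2): with c = x t^l u, the words ending with w satisfy
  E = c R + E (x K(tz) + c (M - K)); an element of K adds a short overlapping tail, a
  longer element of M a fully covered new clump.\<close>
lemma words_ending_equation:
  fixes w :: "'a::finite list" and x t u :: real
  assumes w: "w \<noteq> []"
  defines "c \<equiv> x * t ^ length w * u"
  shows "wgf (text_weight p w x t u) (words_ending w) = fps_const c * gf p (Rset w) +
     wgf (text_weight p w x t u) (words_ending w) *
       (fps_const x * K_scaled p w t + fps_const c * (gf p (Mset w) - gf p (Kset w)))"
proof -
  let ?l = "length w" and ?wt = "text_weight p w x t u" and ?E = "words_ending w"
  define \<phi> where "\<phi> m = prob p m * x * t ^ min (length m) ?l * (if ?l \<le> length m then u else 1)" for m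
  have mult: "?wt (S @ m) = ?wt S * \<phi> m" if "S \<in> ?E" "m \<in> Mset w" for S m
    using occ_cl_append_Mset[OF that w] cov_append_Mset[OF that]
    by (simp add: text_weight_def \<phi>_def prob_append power_add)
  have Rpart: "wgf ?wt (Rset w) = fps_const c * gf p (Rset w)"
  proof -
    have "wgf ?wt (Rset w) = wgf (\<lambda>r. c * prob p r) (Rset w)"
      by (rule wgf_cong) (simp add: text_weight_def stats_Rset c_def)
    thus ?thesis by (simp add: wgf_scale gf_as_wgf)
  qed
  have Mset_split: "Mset w = Kset w \<union> (Mset w - Kset w)" using Kset_subset_Mset by blast
  have long_M: "wgf (prob p) (Mset w - Kset w) = gf p (Mset w) - gf p (Kset w)"
    using wgf_Un_disjoint[of "Kset w" "Mset w - Kset w" "prob p"] Mset_split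
    by (simp add: gf_as_wgf)
  have Mpart: "wgf \<phi> (Mset w) = fps_const x * K_scaled p w t +
                                   fps_const c * (gf p (Mset w) - gf p (Kset w))"
  proof -
    have "wgf \<phi> (Mset w) = wgf \<phi> (Kset w) + wgf \<phi> (Mset w - Kset w)"
      by (subst Mset_split) (rule wgf_Un_disjoint, blast)
    also have "wgf \<phi> (Kset w) = wgf (\<lambda>k. x * (prob p k * t ^ length k)) (Kset w)"
      by (rule wgf_cong) (auto simp: \<phi>_def Kset_eq)
    also have "wgf \<phi> (Mset w - Kset w) = wgf (\<lambda>k. c * prob p k) (Mset w - Kset w)"
      by (rule wgf_cong) (auto simp: \<phi>_def Kset_eq c_def)
    finally show ?thesis by (simp add: wgf_scale long_M K_scaled_as_wgf)
  qed
  have "wgf ?wt ?E = wgf ?wt (Rset w) + wgf ?wt (lang_prod ?E (Mset w))"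
    by (subst words_ending_factorization(1)) (rule wgf_Un_disjoint[OF words_ending_factorization(2)])
  also have "wgf ?wt (lang_prod ?E (Mset w)) = wgf ?wt ?E * wgf \<phi> (Mset w)"
    by (rule wgf_lang_prod[where f = ?wt and g = ?wt and h = \<phi>, OF words_ending_factorization(3) mult])
  finally show ?thesis unfolding Rpart Mpart .
qed

lemma text_equation:
  fixes w :: "'a::finite list"
  shows "Gser p w x t u = gf p (Nset w) + wgf (text_weight p w x t u) (words_ending w) * gf p (Uset w)"
proof -
  let ?wt = "text_weight p w x t u"
  have mult: "?wt (S @ v) = ?wt S * prob p v" if "S \<in> words_ending w" "v \<in> Uset w" for S v
    using stats_append_Uset[OF that] by (simp add: text_weight_def prob_append)
  have "wgf ?wt UNIV = wgf ?wt (Nset w) + wgf ?wt (lang_prod (words_ending w) (Uset w))"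
    by (subst text_factorization(1)) (rule wgf_Un_disjoint[OF text_factorization(2)])
  also have "wgf ?wt (Nset w) = gf p (Nset w)"
    unfolding gf_as_wgf by (rule wgf_cong) (simp add: text_weight_def stats_Nset)
  also have "wgf ?wt (lang_prod (words_ending w) (Uset w)) = wgf ?wt (words_ending w) * gf p (Uset w)"
    unfolding gf_as_wgf
    by (rule wgf_lang_prod[where f = ?wt and g = ?wt and h = "prob p", OF text_factorization(3) mult])
  finally show ?thesis by (simp add: Gser_as_wgf)
qed

section \<open>Solving the equations\<close>

lemma fps_linear_equation_solution:
  fixes f a b :: "'a::field fps"
  assumes eq: "f = a + f * b" and b0: "b $ 0 = 0"
  shows "f = a * inverse (1 - b)"
proof -
  have "f - f * b = a" using eq by (simp only: diff_eq_eq)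
  hence "f * (1 - b) = a" by (simp add: algebra_simps)
  hence "f * ((1 - b) * inverse (1 - b)) = a * inverse (1 - b)" by (simp add: mult.assoc[symmetric])
  thus ?thesis using b0 by (simp add: inverse_mult_eq_1')
qed

lemma fps_divide_monomial_cancel:
  fixes f g :: "real fps"
  assumes low: "\<And>n. n < l \<Longrightarrow> f $ n = 0" and c: "c \<noteq> 0"
  shows "f / (fps_const c * fps_X ^ l) * (fps_const c * fps_X ^ l * g) = f * g"
proof -
  define f' where "f' = fps_shift l f"
  have f: "f = f' * fps_X ^ l"
    unfolding f'_def by (intro fps_ext) (simp add: low fps_X_power_mult_right_nth)
  have "f / (fps_const c * fps_X ^ l) = f' / fps_const c"
    unfolding f by (simp add: fps_divide_cancel)
  also have "\<dots> = f' * fps_const (inverse c)"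
    using c by (simp add: fps_divide_unit fps_const_inverse)
  moreover have "fps_const c * fps_const (inverse c) = fps_const (c * inverse c)"
    by (simp only: fps_const_mult)
  moreover have "fps_const (c * inverse c) = 1" using c by simp
  ultimately show ?thesis unfolding f by (simp add: mult_ac)
qed

lemma K_scaled_nth_0: "K_scaled p w t $ 0 = 0"
  unfolding K_scaled_as_wgf
  by (rule wgf_nth_short) (use Kset_subset_Mset Mset_nonempty in blast)

lemma Rset_low: "n < length w \<Longrightarrow> gf p (Rset w) $ n = 0"
  unfolding gf_as_wgf by (rule wgf_nth_short) (auto simp: Rset_iff dest: words_ending_length)

lemma Mset_minus_Kset_low: "n < length w \<Longrightarrow> (gf p (Mset w) - gf p (Kset w)) $ n = 0"
proof -
  assume n: "n < length w"
  have "{x. x \<in> Mset w \<and> length x = n} = {x. x \<in> Kset w \<and> length x = n}"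
    using n by (auto simp: Kset_eq)
  thus ?thesis by (simp add: gf_def)
qed

lemma Kfrak_closed:
  "Kfrak p w x t = fps_const (x * prob p w * t ^ length w) * fps_X ^ length w *
                   inverse (1 - fps_const x * K_scaled p w t)"
proof -
  have "fps_const x * fps_const (prob p w) * (fps_const t * fps_X) ^ length w =
        fps_const (x * prob p w * t ^ length w) * fps_X ^ length w"
    by (simp add: power_mult_distrib mult_ac flip: fps_const_mult fps_const_power)
  moreover have "(1 - fps_const x * K_scaled p w t) $ 0 \<noteq> 0" by (simp add: K_scaled_nth_0)
  ultimately show ?thesis
    by (simp add: Kfrak_def fps_divide_unit flip: K_scaled_def)
qed

lemma clump_ser_closed:
  fixes w :: "'a::finite list"
  assumes "w \<noteq> []"
  shows "clump_ser p w x t = fps_const (x * prob p w * t ^ length w) * fps_X ^ length w *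
                              inverse (1 - fps_const x * K_scaled p w t)"
  by (rule fps_linear_equation_solution[OF clump_equation[OF assms]]) (simp add: K_scaled_nth_0)

lemma Gser_closed:
  fixes w :: "'a::finite list" and x t u :: real
  assumes w: "w \<noteq> []"
  defines "c \<equiv> x * t ^ length w * u"
  shows "Gser p w x t u = gf p (Nset w) + fps_const c * gf p (Rset w) *
     inverse (1 - fps_const x * K_scaled p w t - fps_const c * (gf p (Mset w) - gf p (Kset w))) *
     gf p (Uset w)"
proof -
  have "wgf (text_weight p w x t u) (words_ending w) = fps_const c * gf p (Rset w) *
     inverse (1 - (fps_const x * K_scaled p w t + fps_const c * (gf p (Mset w) - gf p (Kset w))))"
    using w
    by (intro fps_linear_equation_solution[OF words_ending_equation[OF w, where p = p and x = x
          and t = t and u = u, folded c_def]])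
      (use Mset_minus_Kset_low[of 0 w p] in \<open>simp add: K_scaled_nth_0\<close>)
  thus ?thesis by (simp add: text_equation diff_diff_add)
qed

text \<open>F evaluated at u Kfrak reduces to the same closed form: the division by pi_w z^l in F
  is exact because R and M - K have no words shorter than w.\<close>
lemma Fser_closed:
  fixes w :: "'a::finite list" and x t u :: real
  assumes w: "w \<noteq> []" and \<pi>: "prob p w \<noteq> 0"
  defines "c \<equiv> x * t ^ length w * u"
  shows "Fser p w (fps_const u * Kfrak p w x t) = gf p (Nset w) + fps_const c * gf p (Rset w) *
     inverse (1 - fps_const x * K_scaled p w t - fps_const c * (gf p (Mset w) - gf p (Kset w))) *
     gf p (Uset w)"
proof -
  define P where "P = fps_const (prob p w) * fps_X ^ length w"
  define D where "D = 1 - fps_const x * K_scaled p w t"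
  define MK where "MK = gf p (Mset w) - gf p (Kset w)"
  define E where "E = D - fps_const c * MK"
  have D0: "D $ 0 = 1" by (simp add: D_def K_scaled_nth_0)
  have DiD: "inverse D * D = 1" using D0 by (simp add: inverse_mult_eq_1)
  have y: "fps_const u * Kfrak p w x t = P * (fps_const c * inverse D)"
    by (simp add: Kfrak_closed P_def D_def c_def mult_ac flip: fps_const_mult)
  have R: "gf p (Rset w) / P * (fps_const u * Kfrak p w x t) = gf p (Rset w) * (fps_const c * inverse D)"
    unfolding y P_def using \<pi> by (intro fps_divide_monomial_cancel Rset_low)
  have M: "MK / P * (fps_const u * Kfrak p w x t) = MK * (fps_const c * inverse D)"
    unfolding y P_def MK_def using \<pi> by (intro fps_divide_monomial_cancel Mset_minus_Kset_low)
  have denom: "1 - MK * (fps_const c * inverse D) = E * inverse D"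
    using DiD by (simp add: E_def algebra_simps)
  have inv: "1 / (E * inverse D) = inverse E * D"
  proof -
    have "E $ 0 = 1" using D0 Mset_minus_Kset_low[of 0 w p] w by (simp add: E_def MK_def)
    hence "1 / (E * inverse D) = inverse (E * inverse D)" using D0 by (simp add: fps_divide_unit)
    thus ?thesis using D0 by (simp add: fps_inverse_mult)
  qed
  have "Fser p w (fps_const u * Kfrak p w x t) = gf p (Nset w) +
      gf p (Rset w) / P * (fps_const u * Kfrak p w x t) *
      (1 / (1 - MK / P * (fps_const u * Kfrak p w x t))) * gf p (Uset w)"
    by (simp add: Fser_def P_def MK_def)
  also have "\<dots> = gf p (Nset w) + gf p (Rset w) * (fps_const c * inverse D) * (inverse E * D) * gf p (Uset w)"
    by (simp only: R M denom inv)
  also have "\<dots> = gf p (Nset w) + fps_const c * gf p (Rset w) * inverse E * gf p (Uset w)"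
    using DiD by (simp add: mult_ac)
  finally show ?thesis by (simp add: E_def D_def MK_def)
qed

theorem mainTheorem4:
  fixes p :: "'a::finite \<Rightarrow> real" and w :: "'a list"
  assumes "card (UNIV :: 'a set) \<ge> 2"
    and "\<And>a. p a > 0" and "(\<Sum>a\<in>UNIV. p a) = 1"
    and "length w \<ge> 2"
  shows "\<forall>x t u :: real.
           Gser p w x t u = Fser p w (fps_const u * Kfrak p w x t) \<and>
           Kfrak p w x t = clump_ser p w x t"
proof (intro allI)
  fix x t u :: real
  have w: "w \<noteq> []" using assms(4) by auto
  have \<pi>: "prob p w \<noteq> 0" using prob_pos[of p w] assms(2) by simp
  show "Gser p w x t u = Fser p w (fps_const u * Kfrak p w x t) \<and> Kfrak p w x t = clump_ser p w x t"
    using Gser_closed[OF w] Fser_closed[OF w \<pi>] Kfrak_closed clump_ser_closed[OF w] by simp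
qed

end
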